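(* Let $S$ be an idempotent semiring and define the binary relation $\sigma$ on $S$ by: $a\,\sigma\, b$ if and only if $aba=aba+a+aba$ and $bab=bab+b+bab$. Then the congruence on $S$ generated by $\sigma$ is the least distributive lattice congruence on $S$.
   Context: An idempotent semiring is an algebra $(S,+,\cdot)$ with two binary operations such that $(S,+)$ and $(S,\cdot)$ are bands (associative, with $x+x=x$ and $xx=x$), and both distributive laws $x(y+z)=xy+xz$ and $(x+y)z=xz+yz$ hold; addition is not assumed commutative. A distributive lattice congruence on $S$ is a congruence $\rho$ such that $S/\rho$ is a distributive lattice, i.e. $S/\rho$ satisfies $x+y\approx y+x$, $xy\approx yx$ and $x+xy\approx x$ (in addition to the idempotent semiring axioms). Every idempotent semiring has a least distributive lattice congruence. *)

theory Defs
  imports Main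
begin

text \<open>An idempotent semiring on the carrier type 'a, with operations add and mul
  (addition not assumed commutative).\<close>
definition idem_semiring :: "('a \<Rightarrow> 'a \<Rightarrow> 'a) \<Rightarrow> ('a \<Rightarrow> 'a \<Rightarrow> 'a) \<Rightarrow> bool" where
  "idem_semiring add mul \<longleftrightarrow>
     (\<forall>x y z. add (add x y) z = add x (add y z)) \<and> (\<forall>x. add x x = x) \<and>
     (\<forall>x y z. mul (mul x y) z = mul x (mul y z)) \<and> (\<forall>x. mul x x = x) \<and>
     (\<forall>x y z. mul x (add y z) = add (mul x y) (mul x z)) \<and>
     (\<forall>x y z. mul (add x y) z = add (mul x z) (mul y z))"

definition is_congruence :: "('a \<Rightarrow> 'a \<Rightarrow> 'a) \<Rightarrow> ('a \<Rightarrow> 'a \<Rightarrow> 'a) \<Rightarrow> 'a rel \<Rightarrow> bool" where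
  "is_congruence add mul \<rho> \<longleftrightarrow> equiv UNIV \<rho> \<and>
     (\<forall>a b c d. (a, b) \<in> \<rho> \<and> (c, d) \<in> \<rho> \<longrightarrow>
        (add a c, add b d) \<in> \<rho> \<and> (mul a c, mul b d) \<in> \<rho>)"

text \<open>A congruence whose quotient is a distributive lattice: the quotient satisfies
  x+y = y+x, xy = yx, x + xy = x (the idempotent semiring axioms are inherited).\<close>
definition dl_congruence :: "('a \<Rightarrow> 'a \<Rightarrow> 'a) \<Rightarrow> ('a \<Rightarrow> 'a \<Rightarrow> 'a) \<Rightarrow> 'a rel \<Rightarrow> bool" where
  "dl_congruence add mul \<rho> \<longleftrightarrow> is_congruence add mul \<rho> \<and>
     (\<forall>x y. (add x y, add y x) \<in> \<rho> \<and> (mul x y, mul y x) \<in> \<rho> \<and> (add x (mul x y), x) \<in> \<rho>)"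

definition cong_generated :: "('a \<Rightarrow> 'a \<Rightarrow> 'a) \<Rightarrow> ('a \<Rightarrow> 'a \<Rightarrow> 'a) \<Rightarrow> 'a rel \<Rightarrow> 'a rel" where
  "cong_generated add mul R = \<Inter>{\<rho>. is_congruence add mul \<rho> \<and> R \<subseteq> \<rho>}"

definition sigma_rel :: "('a \<Rightarrow> 'a \<Rightarrow> 'a) \<Rightarrow> ('a \<Rightarrow> 'a \<Rightarrow> 'a) \<Rightarrow> 'a rel" where
  "sigma_rel add mul = {(a, b).
     mul (mul a b) a = add (add (mul (mul a b) a) a) (mul (mul a b) a) \<and>
     mul (mul b a) b = add (add (mul (mul b a) b) b) (mul (mul b a) b)}"

end

theory Submission
  imports Defs
begin

text \<open>Inside any congruence \<open>\<rho>\<close> containing \<open>\<sigma>\<close> we have \<open>xy \<sigma> yx\<close>, \<open>xy \<sigma> xyx\<close> and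
  \<open>x \<sigma> x + xyx\<close>, \<open>x \<sigma> xyx + x\<close>; together they give multiplicative commutativity and
  both absorption laws \<open>x + xy \<rho> x \<rho> xy + x\<close>. Additive commutativity then follows from
  \<open>(x + y)(y + x) = (xy + x) + (y + yx) \<rho> x + y\<close> and the symmetric computation.
  Conversely, in a distributive lattice quotient \<open>aba = aba + a + aba\<close> collapses to
  \<open>ab = a\<close>, so \<open>a \<sigma> b\<close> forces \<open>a = ab = ba = b\<close> there.\<close>

lemma is_congruence_refl: "is_congruence add mul \<rho> \<Longrightarrow> (x, x) \<in> \<rho>"
  unfolding is_congruence_def equiv_def by (auto dest: refl_onD)

lemma is_congruence_sym: "is_congruence add mul \<rho> \<Longrightarrow> (x, y) \<in> \<rho> \<Longrightarrow> (y, x) \<in> \<rho>"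
  unfolding is_congruence_def equiv_def by (auto dest: symD)

lemma is_congruence_trans:
  "is_congruence add mul \<rho> \<Longrightarrow> (x, y) \<in> \<rho> \<Longrightarrow> (y, z) \<in> \<rho> \<Longrightarrow> (x, z) \<in> \<rho>"
  unfolding is_congruence_def equiv_def by (auto dest: transD)

lemma is_congruence_add:
  "is_congruence add mul \<rho> \<Longrightarrow> (a, b) \<in> \<rho> \<Longrightarrow> (c, d) \<in> \<rho> \<Longrightarrow> (add a c, add b d) \<in> \<rho>"
  unfolding is_congruence_def by blast

lemma is_congruence_mul:
  "is_congruence add mul \<rho> \<Longrightarrow> (a, b) \<in> \<rho> \<Longrightarrow> (c, d) \<in> \<rho> \<Longrightarrow> (mul a c, mul b d) \<in> \<rho>"
  unfolding is_congruence_def by blast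

lemma is_congruence_cong_generated: "is_congruence add mul (cong_generated add mul R)"
proof -
  let ?\<rho> = "cong_generated add mul R"
  have "equiv UNIV ?\<rho>"
    unfolding equiv_def refl_on_def sym_def trans_def cong_generated_def
    by (auto intro: is_congruence_refl dest: is_congruence_sym is_congruence_trans)
  moreover have "(add a c, add b d) \<in> ?\<rho> \<and> (mul a c, mul b d) \<in> ?\<rho>"
    if "(a, b) \<in> ?\<rho>" "(c, d) \<in> ?\<rho>" for a b c d
    using that unfolding cong_generated_def by (auto intro: is_congruence_add is_congruence_mul)
  ultimately show ?thesis unfolding is_congruence_def by blast
qed

lemma subset_cong_generated: "R \<subseteq> cong_generated add mul R"
  unfolding cong_generated_def by blast

lemma cong_generated_least:
  "is_congruence add mul \<rho> \<Longrightarrow> R \<subseteq> \<rho> \<Longrightarrow> cong_generated add mul R \<subseteq> \<rho>"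
  unfolding cong_generated_def by blast

locale idempotent_semiring =
  fixes add :: "'a \<Rightarrow> 'a \<Rightarrow> 'a" (infixl "\<oplus>" 65) and mul (infixl "\<odot>" 70)
  assumes idem_semiring: "idem_semiring add mul"
begin

lemma add_assoc: "x \<oplus> y \<oplus> z = x \<oplus> (y \<oplus> z)"
  using idem_semiring unfolding idem_semiring_def by blast

lemma add_idem: "x \<oplus> x = x"
  using idem_semiring unfolding idem_semiring_def by blast

lemma mul_assoc: "x \<odot> y \<odot> z = x \<odot> (y \<odot> z)"
  using idem_semiring unfolding idem_semiring_def by blast

lemma mul_idem: "x \<odot> x = x"
  using idem_semiring unfolding idem_semiring_def by blast

lemma distrib_left: "x \<odot> (y \<oplus> z) = x \<odot> y \<oplus> x \<odot> z"
  using idem_semiring unfolding idem_semiring_def by blast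

lemma distrib_right: "(x \<oplus> y) \<odot> z = x \<odot> z \<oplus> y \<odot> z"
  using idem_semiring unfolding idem_semiring_def by blast

lemma add_left_idem: "x \<oplus> (x \<oplus> y) = x \<oplus> y"
  by (simp only: add_assoc[symmetric] add_idem)

lemma mul_left_idem: "x \<odot> (x \<odot> y) = x \<odot> y"
  by (simp only: mul_assoc[symmetric] mul_idem)

lemma add_idem_assoc: "x \<oplus> (y \<oplus> (x \<oplus> y)) = x \<oplus> y"
  using add_idem[of "x \<oplus> y"] by (simp only: add_assoc)

lemma mul_idem_assoc: "x \<odot> (y \<odot> (x \<odot> y)) = x \<odot> y"
  using mul_idem[of "x \<odot> y"] by (simp only: mul_assoc)

lemma mul_idem_assoc': "x \<odot> (y \<odot> (x \<odot> (y \<odot> z))) = x \<odot> (y \<odot> z)"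
  using mul_idem[of "x \<odot> y"] by (simp only: mul_assoc[symmetric])

lemmas band_simps = add_assoc add_idem mul_assoc mul_idem add_left_idem mul_left_idem
  add_idem_assoc mul_idem_assoc mul_idem_assoc'

lemma sigma_rel_mul_commute: "(x \<odot> y, y \<odot> x) \<in> sigma_rel add mul"
  unfolding sigma_rel_def by (simp add: band_simps)

lemma sigma_rel_mul_absorb: "(x \<odot> y, x \<odot> y \<odot> x) \<in> sigma_rel add mul"
  unfolding sigma_rel_def by (simp add: band_simps)

text \<open>Both elements \<open>c\<close> satisfy \<open>xcx = c\<close> and \<open>cx = c\<close>, so the two defining equations
  of \<open>x \<sigma> c\<close> reduce to \<open>c = c + x + c\<close>.\<close>

lemma sigma_rel_absorb_left: "(x, x \<oplus> x \<odot> y \<odot> x) \<in> sigma_rel add mul"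
proof -
  let ?c = "x \<oplus> x \<odot> y \<odot> x"
  have "x \<odot> ?c \<odot> x = ?c" by (simp add: distrib_left distrib_right band_simps)
  moreover have "?c \<odot> x = ?c" by (simp add: distrib_right band_simps)
  moreover have "?c \<oplus> x \<oplus> ?c = ?c" by (simp add: band_simps)
  ultimately show ?thesis unfolding sigma_rel_def by (simp only: mem_Collect_eq case_prod_conv mul_idem add_idem)
qed

lemma sigma_rel_absorb_right: "(x, x \<odot> y \<odot> x \<oplus> x) \<in> sigma_rel add mul"
proof -
  let ?c = "x \<odot> y \<odot> x \<oplus> x"
  have "x \<odot> ?c \<odot> x = ?c" by (simp add: distrib_left distrib_right band_simps)
  moreover have "?c \<odot> x = ?c" by (simp add: distrib_right band_simps)
  moreover have "?c \<oplus> x \<oplus> ?c = ?c" by (simp add: band_simps)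
  ultimately show ?thesis unfolding sigma_rel_def by (simp only: mem_Collect_eq case_prod_conv mul_idem add_idem)
qed

lemma dl_congruence_if_sigma_rel_subset:
  assumes cong: "is_congruence add mul \<rho>" and sigma: "sigma_rel add mul \<subseteq> \<rho>"
  shows "dl_congruence add mul \<rho>"
proof -
  note refl = is_congruence_refl[OF cong] and sym = is_congruence_sym[OF cong]
    and trans = is_congruence_trans[OF cong] and add_cong = is_congruence_add[OF cong]
  have mul_commute: "(x \<odot> y, y \<odot> x) \<in> \<rho>" for x y
    using sigma_rel_mul_commute sigma by blast
  have absorb_left: "(x \<oplus> x \<odot> y, x) \<in> \<rho>" for x y
  proof -
    have "(x \<oplus> x \<odot> y, x \<oplus> x \<odot> y \<odot> x) \<in> \<rho>"
      using add_cong[OF refl] sigma_rel_mul_absorb sigma by blast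
    moreover have "(x \<oplus> x \<odot> y \<odot> x, x) \<in> \<rho>"
      using sym sigma_rel_absorb_left sigma by blast
    ultimately show ?thesis using trans by blast
  qed
  have absorb_right: "(x \<odot> y \<oplus> x, x) \<in> \<rho>" for x y
  proof -
    have "(x \<odot> y \<oplus> x, x \<odot> y \<odot> x \<oplus> x) \<in> \<rho>"
      using add_cong[OF _ refl] sigma_rel_mul_absorb sigma by blast
    moreover have "(x \<odot> y \<odot> x \<oplus> x, x) \<in> \<rho>"
      using sym sigma_rel_absorb_right sigma by blast
    ultimately show ?thesis using trans by blast
  qed
  have product_of_sums: "(x \<oplus> y) \<odot> (y \<oplus> x) = (x \<odot> y \<oplus> x) \<oplus> (y \<oplus> y \<odot> x)" for x y
    by (simp only: distrib_right, simp only: distrib_left mul_idem add_assoc)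
  have "((x \<oplus> y) \<odot> (y \<oplus> x), x \<oplus> y) \<in> \<rho>" for x y
    unfolding product_of_sums by (rule add_cong[OF absorb_right absorb_left])
  then have add_commute: "(x \<oplus> y, y \<oplus> x) \<in> \<rho>" for x y
    using mul_commute sym trans by meson
  show ?thesis
    unfolding dl_congruence_def using cong add_commute mul_commute absorb_left by blast
qed

lemma sigma_rel_subset_if_dl_congruence:
  assumes dl: "dl_congruence add mul \<rho>"
  shows "sigma_rel add mul \<subseteq> \<rho>"
proof -
  have cong: "is_congruence add mul \<rho>" using dl unfolding dl_congruence_def by blast
  note refl = is_congruence_refl[OF cong] and sym = is_congruence_sym[OF cong]
    and trans = is_congruence_trans[OF cong] and add_cong = is_congruence_add[OF cong]
  have add_commute: "(x \<oplus> y, y \<oplus> x) \<in> \<rho>" and mul_commute: "(x \<odot> y, y \<odot> x) \<in> \<rho>"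
    and absorb: "(x \<oplus> x \<odot> y, x) \<in> \<rho>" for x y
    using dl unfolding dl_congruence_def by blast+
  have related_to_product: "(x, x \<odot> y) \<in> \<rho>"
    if eq: "x \<odot> y \<odot> x = x \<odot> y \<odot> x \<oplus> x \<oplus> x \<odot> y \<odot> x" for x y
  proof -
    have xyx: "(x \<odot> y \<odot> x, x \<odot> y) \<in> \<rho>"
      using mul_commute[of "x \<odot> y" x] by (simp add: band_simps)
    have "(x \<odot> y \<odot> x \<oplus> x \<oplus> x \<odot> y \<odot> x, x \<odot> y \<oplus> x \<oplus> x \<odot> y) \<in> \<rho>"
      by (intro add_cong xyx refl)
    moreover have "(x \<odot> y \<oplus> x \<oplus> x \<odot> y, x \<oplus> x \<odot> y) \<in> \<rho>"
      by (intro add_cong refl trans[OF add_commute absorb])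
    ultimately have "(x \<odot> y \<odot> x, x) \<in> \<rho>"
      unfolding eq[symmetric] by (metis trans absorb)
    then show ?thesis by (metis trans sym xyx)
  qed
  show ?thesis
  proof
    fix p assume "p \<in> sigma_rel add mul"
    then obtain a b where p: "p = (a, b)"
      and "a \<odot> b \<odot> a = a \<odot> b \<odot> a \<oplus> a \<oplus> a \<odot> b \<odot> a"
      and "b \<odot> a \<odot> b = b \<odot> a \<odot> b \<oplus> b \<oplus> b \<odot> a \<odot> b"
      unfolding sigma_rel_def by blast
    then have "(a, a \<odot> b) \<in> \<rho>" and "(b, b \<odot> a) \<in> \<rho>" by (simp_all only: related_to_product)
    then show "p \<in> \<rho>" unfolding p by (metis trans sym mul_commute)
  qed
qed

lemma dl_congruence_iff_sigma_rel_subset: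
  "dl_congruence add mul \<rho> \<longleftrightarrow> is_congruence add mul \<rho> \<and> sigma_rel add mul \<subseteq> \<rho>"
  using dl_congruence_if_sigma_rel_subset sigma_rel_subset_if_dl_congruence
  unfolding dl_congruence_def by blast

end

theorem lemma2p1:
  fixes add mul :: "'a \<Rightarrow> 'a \<Rightarrow> 'a"
  assumes "idem_semiring add mul"
  shows "dl_congruence add mul (cong_generated add mul (sigma_rel add mul)) \<and>
         (\<forall>\<rho>. dl_congruence add mul \<rho> \<longrightarrow> cong_generated add mul (sigma_rel add mul) \<subseteq> \<rho>)"
proof -
  interpret idempotent_semiring add mul using assms by unfold_locales
  let ?\<gamma> = "cong_generated add mul (sigma_rel add mul)"
  have "dl_congruence add mul ?\<gamma>"
    using dl_congruence_if_sigma_rel_subset is_congruence_cong_generated subset_cong_generated .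
  moreover have "?\<gamma> \<subseteq> \<rho>" if "dl_congruence add mul \<rho>" for \<rho>
    using that cong_generated_least unfolding dl_congruence_iff_sigma_rel_subset by blast
  ultimately show ?thesis by blast
qed

end
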